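(* Let $f:\mathcal{P}_2(H)\to U$ be absolutely continuous $L$-differentiable, $\mu_0\in\mathcal{P}_2(H)$ and $X_0\in L^2(\Omega,H)$ with $\mathcal{L}(X_0)=\mu_0$. Then for all $u\in H$ and $v\in U$, $$\langle\partial_\mu f(\mu_0)(y)u,v\rangle_U=\big\langle u,\mathbb{E}\big[D\hat f(X_0)^\ast v\mid X_0=y\big]\big\rangle_H\quad\text{for }\mu_0\text{-a.e. }y,$$ i.e. $\partial_\mu f(\mu_0)(y)^\ast v=\mathbb{E}[D\hat f(X_0)^\ast v\mid X_0=y]$ $\mu_0$-a.e.
   Context: $(\Omega,\mathcal{F},\mathbb{P})$ complete atomless probability space, $\Omega$ Polish; $H,U$ separable real Hilbert spaces. $\hat f(X)=f(\mathcal{L}(X))$ is the lift on $L^2(\Omega,H)$, and $D\hat f(X_0)^\ast:U\to L^2(\Omega,H)$ is the Hilbert adjoint of $D\hat f(X_0)\in L(L^2(\Omega,H),U)$. $f$ is absolutely continuous $L$-differentiable if $\hat f$ is Fréchet differentiable, each $D\hat f(X)$ has finite 2-variation norm $|\!|\!|L|\!|\!|_{2,\mathbb{P}}:=\sup\{\sum_i\|L(\mathbf{1}_{A_i}x_i)\|_U:A_i\in\mathcal{F}$ pairwise disjoint, $x_i\in H$, $\mathbb{E}\|\sum_i\mathbf{1}_{A_i}x_i\|^2\le1\}$, and $X\mapsto D\hat f(X)$ is continuous in this norm; then $\partial_\mu f(\mu_0)\in L^2(H,\mu_0;L(H,U))$ is the unique element with $D\hat f(X)Y=\mathbb{E}[\partial_\mu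 f(\mu_0)(X)Y]$ for all $X\sim\mu_0$ and $Y\in L^2(\Omega,H)$. *)

theory Defs
  imports "HOL-Analysis.Analysis" "HOL-Probability.Probability"
begin

definition standing_space :: "'w::polish_space measure \<Rightarrow> bool" where
  "standing_space M \<longleftrightarrow> prob_space M \<and> space M = UNIV \<and>
     (\<exists>N. sets N = sets (borel :: 'w measure) \<and> M = completion N) \<and>
     (\<forall>A\<in>sets M. measure M A > 0 \<longrightarrow>
        (\<exists>B\<in>sets M. B \<subseteq> A \<and> 0 < measure M B \<and> measure M B < measure M A))"

definition L2 :: "'w measure \<Rightarrow> ('w \<Rightarrow> 'b::{real_normed_vector, second_countable_topology}) set" where
  "L2 M = {X. X \<in> borel_measurable M \<and> integrable M (\<lambda>w. (norm (X w))\<^sup>2)}"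

definition L2norm :: "'w measure \<Rightarrow> ('w \<Rightarrow> 'b::real_normed_vector) \<Rightarrow> real" where
  "L2norm M X = sqrt (integral\<^sup>L M (\<lambda>w. (norm (X w))\<^sup>2))"

definition law :: "'w measure \<Rightarrow> ('w \<Rightarrow> 'h::topological_space) \<Rightarrow> 'h measure" where
  "law M X = distr M borel X"

definition P2 :: "'h::real_normed_vector measure set" where
  "P2 = {\<mu>. prob_space \<mu> \<and> sets \<mu> = sets borel \<and> integrable \<mu> (\<lambda>x. (norm x)\<^sup>2)}"

definition lift :: "'w measure \<Rightarrow> ('h::topological_space measure \<Rightarrow> 'u) \<Rightarrow> ('w \<Rightarrow> 'h) \<Rightarrow> 'u" where
  "lift M f X = f (law M X)"

definition bounded_linear_L2 ::
  "'w measure \<Rightarrow> (('w \<Rightarrow> 'h::{real_normed_vector, second_countable_topology}) \<Rightarrow> 'u::real_normed_vector) \<Rightarrow> bool" where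
  "bounded_linear_L2 M L \<longleftrightarrow>
     (\<forall>Y\<in>L2 M. \<forall>Z\<in>L2 M. \<forall>a b. L (\<lambda>w. a *\<^sub>R Y w + b *\<^sub>R Z w) = a *\<^sub>R L Y + b *\<^sub>R L Z) \<and>
     (\<exists>C. \<forall>Y\<in>L2 M. norm (L Y) \<le> C * L2norm M Y)"

definition frechet_L2 ::
  "'w measure \<Rightarrow> (('w \<Rightarrow> 'h::{real_normed_vector, second_countable_topology}) \<Rightarrow> 'u::real_normed_vector)
   \<Rightarrow> ('w \<Rightarrow> 'h) \<Rightarrow> (('w \<Rightarrow> 'h) \<Rightarrow> 'u) \<Rightarrow> bool" where
  "frechet_L2 M F X L \<longleftrightarrow> bounded_linear_L2 M L \<and>
     (\<forall>e>0. \<exists>d>0. \<forall>Y\<in>L2 M. L2norm M Y < d \<longrightarrow>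
        norm (F (\<lambda>w. X w + Y w) - F X - L Y) \<le> e * L2norm M Y)"

definition var2 ::
  "'w measure \<Rightarrow> (('w \<Rightarrow> 'h::real_normed_vector) \<Rightarrow> 'u::real_normed_vector) \<Rightarrow> ereal" where
  "var2 M L = (SUP (I, A, x) \<in> {(I, A, x).
        finite (I :: nat set) \<and> (\<forall>i\<in>I. A i \<in> sets M) \<and> disjoint_family_on A I \<and>
        integral\<^sup>L M (\<lambda>w. (norm (\<Sum>i\<in>I. indicator (A i) w *\<^sub>R x i))\<^sup>2) \<le> 1}.
      ereal (\<Sum>i\<in>I. norm (L (\<lambda>w. indicator (A i) w *\<^sub>R x i))))"

definition abs_cont_L_diff ::
  "'w measure \<Rightarrow> ('h::{real_normed_vector, second_countable_topology} measure \<Rightarrow> 'u::real_normed_vector)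
   \<Rightarrow> (('w \<Rightarrow> 'h) \<Rightarrow> ('w \<Rightarrow> 'h) \<Rightarrow> 'u) \<Rightarrow> bool" where
  "abs_cont_L_diff M f Df \<longleftrightarrow>
     (\<forall>X\<in>L2 M. frechet_L2 M (lift M f) X (Df X) \<and> var2 M (Df X) < \<infinity>) \<and>
     (\<forall>X\<in>L2 M. \<forall>e>0. \<exists>d>0. \<forall>X'\<in>L2 M. L2norm M (\<lambda>w. X' w - X w) < d \<longrightarrow>
         var2 M (\<lambda>Y. Df X' Y - Df X Y) < ereal e)"

definition is_L_derivative ::
  "'w measure \<Rightarrow> (('w \<Rightarrow> 'h::{real_normed_vector, second_countable_topology}) \<Rightarrow> ('w \<Rightarrow> 'h) \<Rightarrow> 'u::{banach, second_countable_topology})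
   \<Rightarrow> 'h measure \<Rightarrow> ('h \<Rightarrow> ('h \<Rightarrow>\<^sub>L 'u)) \<Rightarrow> bool" where
  "is_L_derivative M Df \<mu>0 g \<longleftrightarrow>
     g \<in> borel_measurable borel \<and> integrable \<mu>0 (\<lambda>y. (norm (g y))\<^sup>2) \<and>
     (\<forall>X\<in>L2 M. law M X = \<mu>0 \<longrightarrow>
        (\<forall>Y\<in>L2 M. Df X Y = integral\<^sup>L M (\<lambda>w. blinfun_apply (g (X w)) (Y w))))"

definition is_adjoint_at ::
  "'w measure \<Rightarrow> (('w \<Rightarrow> 'h::{real_inner, second_countable_topology}) \<Rightarrow> 'u::real_inner) \<Rightarrow> 'u \<Rightarrow> ('w \<Rightarrow> 'h) \<Rightarrow> bool" where
  "is_adjoint_at M L v Z \<longleftrightarrow> Z \<in> L2 M \<and>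
     (\<forall>Y\<in>L2 M. inner (L Y) v = integral\<^sup>L M (\<lambda>w. inner (Y w) (Z w)))"

definition is_cond_exp_given ::
  "'w measure \<Rightarrow> ('w \<Rightarrow> 'h::{banach, second_countable_topology}) \<Rightarrow> ('w \<Rightarrow> 'k::{banach, second_countable_topology})
   \<Rightarrow> ('h \<Rightarrow> 'k) \<Rightarrow> bool" where
  "is_cond_exp_given M X Z \<phi> \<longleftrightarrow> \<phi> \<in> borel_measurable borel \<and> integrable M (\<lambda>w. \<phi> (X w)) \<and>
     (\<forall>B\<in>sets borel. integral\<^sup>L M (\<lambda>w. indicator B (X w) *\<^sub>R Z w)
                    = integral\<^sup>L M (\<lambda>w. indicator B (X w) *\<^sub>R \<phi> (X w)))"

end

theory Submission
  imports Defs
begin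

text \<open>Test the derivative in the direction \<open>Y = 1\<^sub>A(X\<^sub>0) u\<close> for a Borel set \<open>A\<close>.
  The L-derivative representation gives \<open>\<langle>D f(X\<^sub>0) Y, v\<rangle> = E[1\<^sub>A(X\<^sub>0) \<langle>\<partial>\<^sub>\<mu> f(\<mu>\<^sub>0)(X\<^sub>0) u, v\<rangle>]\<close>,
  while the adjoint and the defining property of the conditional expectation give
  \<open>\<langle>D f(X\<^sub>0) Y, v\<rangle> = E[\<langle>Y, D f(X\<^sub>0)\<^sup>* v\<rangle>] = E[1\<^sub>A(X\<^sub>0) \<langle>u, E[D f(X\<^sub>0)\<^sup>* v | X\<^sub>0]\<rangle>]\<close>.
  So the two real functions of \<open>y\<close> have the same integral over every Borel set with respect to
  \<open>\<mu>\<^sub>0 = L(X\<^sub>0)\<close>, and therefore agree \<open>\<mu>\<^sub>0\<close>-almost everywhere.\<close>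

lemma (in finite_measure) integrable_if_norm_square_integrable:
  fixes f :: "'a \<Rightarrow> 'b::{banach, second_countable_topology}"
  assumes [measurable]: "f \<in> borel_measurable M"
    and "integrable M (\<lambda>x. (norm (f x))\<^sup>2)"
  shows "integrable M f"
proof -
  have "integrable M (\<lambda>x. norm (f x))"
    using assms(2) by (rule square_integrable_imp_integrable[rotated]) measurable
  then show ?thesis by (simp add: integrable_norm_iff)
qed

lemma borel_measurable_blinfun_apply_point:
  fixes F :: "'a \<Rightarrow> 'b::real_normed_vector \<Rightarrow>\<^sub>L 'c::real_normed_vector"
  assumes "F \<in> borel_measurable M"
  shows "(\<lambda>x. F x u) \<in> borel_measurable M"
proof -
  have "(\<lambda>L::'b \<Rightarrow>\<^sub>L 'c. L u) \<in> borel_measurable borel"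
    by (intro borel_measurable_continuous_onI continuous_intros)
  from measurable_compose[OF assms this] show ?thesis .
qed

lemma integrable_indicator_preimage_scaleR:
  fixes f :: "'a \<Rightarrow> 'b::{banach, second_countable_topology}"
  assumes "integrable M f" and [measurable]: "X \<in> measurable M N" "A \<in> sets N"
  shows "integrable M (\<lambda>w. indicator A (X w) *\<^sub>R f w)"
proof (rule Bochner_Integration.integrable_bound[OF assms(1)])
  have [measurable]: "f \<in> borel_measurable M" using assms(1) by simp
  show "(\<lambda>w. indicator A (X w) *\<^sub>R f w) \<in> borel_measurable M" by measurable
  show "AE w in M. norm (indicator A (X w) *\<^sub>R f w) \<le> norm (f w)"
    by (simp add: indicator_def)
qed

lemma AE_distr_eq_if_integrals_over_preimages_eq:
  fixes h1 h2 :: "'b \<Rightarrow> real"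
  assumes [measurable]: "X \<in> measurable M N" "h1 \<in> borel_measurable N" "h2 \<in> borel_measurable N"
    and "integrable M (\<lambda>w. h1 (X w))" "integrable M (\<lambda>w. h2 (X w))"
    and integrals_eq: "\<And>A. A \<in> sets N \<Longrightarrow>
      (\<integral>w. indicator A (X w) * h1 (X w) \<partial>M) = (\<integral>w. indicator A (X w) * h2 (X w) \<partial>M)"
  shows "AE y in distr M N X. h1 y = h2 y"
proof (rule density_unique_real)
  show "integrable (distr M N X) h1" "integrable (distr M N X) h2"
    using assms by (simp_all add: integrable_distr_eq)
  have set_integral_distr: "(\<integral>y\<in>A. h y \<partial>distr M N X) = (\<integral>w. indicator A (X w) * h (X w) \<partial>M)"
    if [measurable]: "A \<in> sets N" "h \<in> borel_measurable N" for A and h :: "'b \<Rightarrow> real"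
    unfolding set_lebesgue_integral_def by (subst integral_distr) auto
  show "(\<integral>y\<in>A. h1 y \<partial>distr M N X) = (\<integral>y\<in>A. h2 y \<partial>distr M N X)" if "A \<in> sets (distr M N X)" for A
    using that integrals_eq by (simp add: set_integral_distr)
qed

lemma (in finite_measure) integrable_if_L2:
  fixes Z :: "'a \<Rightarrow> 'b::{banach, second_countable_topology}"
  shows "Z \<in> L2 M \<Longrightarrow> integrable M Z"
  unfolding L2_def by (auto intro!: integrable_if_norm_square_integrable)

lemma (in finite_measure) indicator_scaleR_in_L2:
  assumes [measurable]: "X \<in> measurable M N" "A \<in> sets N"
  shows "(\<lambda>w. indicator A (X w) *\<^sub>R u) \<in> L2 M"
  unfolding L2_def
proof (intro CollectI conjI)
  show "(\<lambda>w. indicator A (X w) *\<^sub>R u) \<in> borel_measurable M" by measurable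
  show "integrable M (\<lambda>w. (norm (indicator A (X w) *\<^sub>R u))\<^sup>2)"
  proof (rule Bochner_Integration.integrable_bound)
    show "integrable M (\<lambda>_. (norm u)\<^sup>2)" by simp
    show "(\<lambda>w. (norm (indicator A (X w) *\<^sub>R u))\<^sup>2) \<in> borel_measurable M" by measurable
    show "AE w in M. norm ((norm (indicator A (X w) *\<^sub>R u))\<^sup>2) \<le> norm ((norm u)\<^sup>2)"
      by (simp add: indicator_def)
  qed
qed

lemma (in finite_measure) integrable_L_derivative_apply:
  assumes "is_L_derivative M Df \<mu>0 g" "X \<in> L2 M" "law M X = \<mu>0"
  shows "integrable M (\<lambda>w. g (X w) u)"
proof (rule Bochner_Integration.integrable_bound)
  have [measurable]: "X \<in> borel_measurable M" "g \<in> borel_measurable borel"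
    using assms by (auto simp: L2_def is_L_derivative_def)
  have "integrable (distr M borel X) (\<lambda>y. (norm (g y))\<^sup>2)"
    using assms by (simp add: is_L_derivative_def law_def)
  then have "integrable M (\<lambda>w. (norm (g (X w)))\<^sup>2)"
    by (simp add: integrable_distr_eq)
  then have "integrable M (\<lambda>w. norm (g (X w)))"
    by (rule square_integrable_imp_integrable[rotated]) measurable
  then show "integrable M (\<lambda>w. norm (g (X w)) * norm u)"
    by (rule integrable_mult_left)
  show "(\<lambda>w. g (X w) u) \<in> borel_measurable M"
    by (rule borel_measurable_blinfun_apply_point) measurable
  show "AE w in M. norm (g (X w) u) \<le> norm (norm (g (X w)) * norm u)"
    by (simp add: norm_blinfun)
qed

lemma (in finite_measure) L_derivative_pairing_indicator_direction:
  assumes "is_L_derivative M Df \<mu>0 g" "X \<in> L2 M" "law M X = \<mu>0" "A \<in> sets borel"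
  shows "inner (Df X (\<lambda>w. indicator A (X w) *\<^sub>R u)) v
    = (\<integral>w. indicator A (X w) * inner (g (X w) u) v \<partial>M)"
proof -
  have [measurable]: "X \<in> borel_measurable M" using assms(2) by (simp add: L2_def)
  have gu: "integrable M (\<lambda>w. indicator A (X w) *\<^sub>R g (X w) u)"
    using integrable_L_derivative_apply[OF assms(1-3)] by (rule integrable_indicator_preimage_scaleR) fact+
  have "Df X (\<lambda>w. indicator A (X w) *\<^sub>R u) = (\<integral>w. indicator A (X w) *\<^sub>R g (X w) u \<partial>M)"
    using assms indicator_scaleR_in_L2[of X borel A u]
    by (simp add: is_L_derivative_def blinfun.scaleR_right)
  also have "inner \<dots> v = (\<integral>w. inner (indicator A (X w) *\<^sub>R g (X w) u) v \<partial>M)"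
    using gu by (intro integral_inner_left[symmetric])
  finally show ?thesis by simp
qed

lemma (in finite_measure) adjoint_cond_exp_pairing_indicator_direction:
  assumes "is_adjoint_at M L v Z" "is_cond_exp_given M X Z \<phi>"
    and [measurable]: "X \<in> borel_measurable M" "A \<in> sets borel"
  shows "inner (L (\<lambda>w. indicator A (X w) *\<^sub>R u)) v
    = (\<integral>w. indicator A (X w) * inner u (\<phi> (X w)) \<partial>M)"
proof -
  have Z: "integrable M Z" and \<phi>: "integrable M (\<lambda>w. \<phi> (X w))"
    using assms(1,2) by (auto simp: is_adjoint_at_def is_cond_exp_given_def intro: integrable_if_L2)
  have "inner (L (\<lambda>w. indicator A (X w) *\<^sub>R u)) v = (\<integral>w. inner u (indicator A (X w) *\<^sub>R Z w) \<partial>M)"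
    using assms(1) indicator_scaleR_in_L2[of X borel A u] by (simp add: is_adjoint_at_def)
  also have "\<dots> = inner u (\<integral>w. indicator A (X w) *\<^sub>R Z w \<partial>M)"
    using integrable_indicator_preimage_scaleR[OF Z assms(3,4)] by (intro integral_inner_right) auto
  also have "\<dots> = inner u (\<integral>w. indicator A (X w) *\<^sub>R \<phi> (X w) \<partial>M)"
    using assms(2) by (simp add: is_cond_exp_given_def)
  also have "\<dots> = (\<integral>w. inner u (indicator A (X w) *\<^sub>R \<phi> (X w)) \<partial>M)"
    using integrable_indicator_preimage_scaleR[OF \<phi> assms(3,4)] by (intro integral_inner_right[symmetric]) auto
  finally show ?thesis by simp
qed

theorem lemma3p11:
  fixes M :: "'w::polish_space measure"
    and f :: "'h::{real_inner, banach, second_countable_topology} measure \<Rightarrow> 'u::{real_inner, banach, second_countable_topology}"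
    and Df :: "('w \<Rightarrow> 'h) \<Rightarrow> ('w \<Rightarrow> 'h) \<Rightarrow> 'u"
    and \<mu>0 :: "'h measure"
    and X0 :: "'w \<Rightarrow> 'h"
    and g :: "'h \<Rightarrow> ('h \<Rightarrow>\<^sub>L 'u)"
  assumes "standing_space M"
    and "abs_cont_L_diff M f Df"
    and "\<mu>0 \<in> P2"
    and "X0 \<in> L2 M"
    and "law M X0 = \<mu>0"
    and "is_L_derivative M Df \<mu>0 g"
  shows "\<forall>v Z \<phi>. is_adjoint_at M (Df X0) v Z \<longrightarrow> is_cond_exp_given M X0 Z \<phi> \<longrightarrow>
           (\<forall>u. AE y in \<mu>0. inner (blinfun_apply (g y) u) v = inner u (\<phi> y))"
proof (intro allI impI)
  fix v Z \<phi> u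
  assume adj: "is_adjoint_at M (Df X0) v Z" and ce: "is_cond_exp_given M X0 Z \<phi>"
  interpret prob_space M using assms(1) by (simp add: standing_space_def)
  have [measurable]: "X0 \<in> borel_measurable M" "g \<in> borel_measurable borel" "\<phi> \<in> borel_measurable borel"
    using assms(4,6) ce by (auto simp: L2_def is_L_derivative_def is_cond_exp_given_def)
  have \<mu>0: "\<mu>0 = distr M borel X0"
    using assms(5) by (simp add: law_def)
  show "AE y in \<mu>0. inner (g y u) v = inner u (\<phi> y)"
    unfolding \<mu>0
  proof (rule AE_distr_eq_if_integrals_over_preimages_eq)
    have "(\<lambda>y. g y u) \<in> borel_measurable borel"
      by (rule borel_measurable_blinfun_apply_point) fact
    then show "(\<lambda>y. inner (g y u) v) \<in> borel_measurable borel"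
      by (intro borel_measurable_inner) auto
    show "integrable M (\<lambda>w. inner (g (X0 w) u) v)"
      using integrable_L_derivative_apply[OF assms(6,4,5)] by simp
    show "integrable M (\<lambda>w. inner u (\<phi> (X0 w)))"
      using ce by (simp add: is_cond_exp_given_def)
    fix A :: "'h set"
    assume A: "A \<in> sets borel"
    show "(\<integral>w. indicator A (X0 w) * inner (g (X0 w) u) v \<partial>M)
      = (\<integral>w. indicator A (X0 w) * inner u (\<phi> (X0 w)) \<partial>M)"
      using L_derivative_pairing_indicator_direction[OF assms(6,4,5) A]
        adjoint_cond_exp_pairing_indicator_direction[OF adj ce _ A]
      by simp
  qed simp_all
qed

end
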